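(* Suppose there are real numbers $a_k,b_k$, $k\in\{1,\dots,m\}$, such that $g(x)=\min_{k\in[m]}\{a_k+b_kx\}$ for all $x\in[0,1]$. Then $\sup_{\mathbf x\in[0,1]^c}\mathcal R(\mathbf x)$ equals the optimal value of the linear program $$\max_{\pi\ge 0,\ (g_j)_{j=1}^c}\ \sum_{j=1}^c\lambda g_j\quad\text{s.t.}\quad g_j\le a_k\pi_j+b_k\frac{c-j+1}{\lambda d}\pi_{j-1}\ \ \forall k\in[m],\,j\in[c];\qquad \pi_j\ge \frac{c-j+1}{\lambda d}\pi_{j-1}\ \ \forall j\in[c];\qquad \sum_{j=0}^c\pi_j=1 .$$
   Context: Setting. Fix $c\in\mathbb N$ (number of identical units of a single reusable resource), an arrival rate $\lambda>0$ and a mean usage duration $d>0$, with $x^*:=c/(\lambda d)\in(0,1)$. Let $g:[0,1]\to\mathbb R$ be concave, non-decreasing, with $g(0)=0$ (the reward function). A stock-dependent policy is a vector $\mathbf x=(x_1,\dots,x_c)\in[0,1]^c$, where $x_j$ is the admission probability used when exactly $j$ units are available (the admission probability is $0$ when no unit is available). Its steady-state distribution is the unique probability vector $\pi=(\pi_0,\dots,\pi_c)$ satisfying $\pi_j\lambda x_j=\pi_{j-1}(c-j+1)/d$ for all $j\in\{1,\dots,c\}$, and its long-run average reward is $\mathcal R(\mathbf x)=\sum_{j=1}^c\pi_j\lambda g(x_j)$. *)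

theory Defs
  imports "HOL-Analysis.Analysis"
begin

definition steady_state :: "nat \<Rightarrow> real \<Rightarrow> real \<Rightarrow> (nat \<Rightarrow> real) \<Rightarrow> (nat \<Rightarrow> real)" where
  "steady_state c lam d x = (THE p.
      (\<forall>j\<le>c. 0 \<le> p j) \<and> (\<forall>j>c. p j = 0) \<and> (\<Sum>j=0..c. p j) = 1 \<and>
      (\<forall>j\<in>{1..c}. p j * lam * x j = p (j - 1) * (real c - real j + 1) / d))"

definition avg_reward :: "nat \<Rightarrow> real \<Rightarrow> real \<Rightarrow> (real \<Rightarrow> real) \<Rightarrow> (nat \<Rightarrow> real) \<Rightarrow> real" where
  "avg_reward c lam d g x = (\<Sum>j=1..c. steady_state c lam d x j * lam * g (x j))"

definition policies :: "nat \<Rightarrow> (nat \<Rightarrow> real) set" where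
  "policies c = {x. \<forall>j\<in>{1..c}. 0 \<le> x j \<and> x j \<le> 1}"

definition lp_feasible :: "nat \<Rightarrow> real \<Rightarrow> real \<Rightarrow> nat \<Rightarrow> (nat \<Rightarrow> real) \<Rightarrow> (nat \<Rightarrow> real)
    \<Rightarrow> (nat \<Rightarrow> real) \<Rightarrow> (nat \<Rightarrow> real) \<Rightarrow> bool" where
  "lp_feasible c lam d m a b p gg \<longleftrightarrow>
     (\<forall>j\<in>{0..c}. 0 \<le> p j) \<and>
     (\<forall>k\<in>{1..m}. \<forall>j\<in>{1..c}.
        gg j \<le> a k * p j + b k * ((real c - real j + 1) / (lam * d)) * p (j - 1)) \<and>
     (\<forall>j\<in>{1..c}. p j \<ge> ((real c - real j + 1) / (lam * d)) * p (j - 1)) \<and>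
     (\<Sum>j=0..c. p j) = 1"

definition lp_objective :: "nat \<Rightarrow> real \<Rightarrow> (nat \<Rightarrow> real) \<Rightarrow> real" where
  "lp_objective c lam gg = (\<Sum>j=1..c. lam * gg j)"

end

theory Submission
  imports Defs
begin

text \<open>The balance equations say \<open>\<pi>\<^sub>j x\<^sub>j = \<rho>\<^sub>j \<pi>\<^sub>j\<^sub>-\<^sub>1\<close> with
  \<open>\<rho>\<^sub>j = (c - j + 1)/(\<lambda> d)\<close>. Since \<open>\<pi>\<^sub>j \<ge> 0\<close> and \<open>g\<close> is a minimum of affine
  functions, \<open>\<pi>\<^sub>j g(x\<^sub>j) = min\<^sub>k (a\<^sub>k \<pi>\<^sub>j + b\<^sub>k \<rho>\<^sub>j \<pi>\<^sub>j\<^sub>-\<^sub>1)\<close>, so the reward of a policy is the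
  LP objective at its steady state with the largest feasible \<open>g\<^sub>j\<close>. Conversely, every distribution
  with \<open>\<pi>\<^sub>j \<ge> \<rho>\<^sub>j \<pi>\<^sub>j\<^sub>-\<^sub>1\<close> is the steady state of the policy \<open>x\<^sub>j = \<rho>\<^sub>j \<pi>\<^sub>j\<^sub>-\<^sub>1 / \<pi>\<^sub>j\<close>. Hence
  the rewards form the image of a compact set of distributions under a continuous map, and the
  supremum is attained and equals the LP optimum.\<close>

definition service_ratio :: "nat \<Rightarrow> real \<Rightarrow> real \<Rightarrow> nat \<Rightarrow> real" where
  "service_ratio c lam d j = (real c - real j + 1) / (lam * d)"

definition is_steady_state :: "nat \<Rightarrow> real \<Rightarrow> real \<Rightarrow> (nat \<Rightarrow> real) \<Rightarrow> (nat \<Rightarrow> real) \<Rightarrow> bool" where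
  "is_steady_state c lam d x p \<longleftrightarrow>
     (\<forall>j\<le>c. 0 \<le> p j) \<and> (\<forall>j>c. p j = 0) \<and> (\<Sum>j=0..c. p j) = 1 \<and>
     (\<forall>j\<in>{1..c}. p j * lam * x j = p (j - 1) * (real c - real j + 1) / d)"

definition steady_state_weight :: "nat \<Rightarrow> real \<Rightarrow> real \<Rightarrow> (nat \<Rightarrow> real) \<Rightarrow> nat \<Rightarrow> real" where
  "steady_state_weight c lam d x j = (\<Prod>i\<in>{Suc j..c}. lam * x i * d / (real c - real i + 1))"

lemma steady_state_weight_pred:
  "j \<in> {1..c} \<Longrightarrow> steady_state_weight c lam d x (j - 1)
     = lam * x j * d / (real c - real j + 1) * steady_state_weight c lam d x j"
  unfolding steady_state_weight_def by (simp add: prod.atLeast_Suc_atMost)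

lemma is_steady_state_eq_weight:
  assumes "is_steady_state c lam d x p" "d > 0" "j \<le> c"
  shows "p j = p c * steady_state_weight c lam d x j"
  using \<open>j \<le> c\<close>
proof (induction rule: inc_induct)
  case base
  show ?case by (simp add: steady_state_weight_def)
next
  case (step n)
  then have j: "Suc n \<in> {1..c}" by simp
  have "p (Suc n) * lam * x (Suc n) = p (Suc n - 1) * (real c - real (Suc n) + 1) / d"
    using assms(1) j unfolding is_steady_state_def by blast
  then have "p n = lam * x (Suc n) * d / (real c - real (Suc n) + 1) * p (Suc n)"
    using step.hyps \<open>d > 0\<close> by (simp add: field_simps)
  then show ?case
    using step.IH steady_state_weight_pred[OF j] by simp
qed

lemma is_steady_state_unique:
  assumes p: "is_steady_state c lam d x p" and q: "is_steady_state c lam d x q" and "d > 0"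
  shows "p = q"
proof
  define W where "W = (\<Sum>j=0..c. steady_state_weight c lam d x j)"
  have normalised: "r c * W = 1" if r: "is_steady_state c lam d x r" for r
  proof -
    have "(\<Sum>j=0..c. r j) = (\<Sum>j=0..c. r c * steady_state_weight c lam d x j)"
      by (intro sum.cong refl is_steady_state_eq_weight[OF r \<open>d > 0\<close>]) simp
    with r show ?thesis
      unfolding W_def is_steady_state_def by (simp add: sum_distrib_left)
  qed
  have "p c * W = q c * W" "W \<noteq> 0"
    using normalised[OF p] normalised[OF q] by auto
  then have "p c = q c" by simp
  fix j
  show "p j = q j"
  proof (cases "j \<le> c")
    case True
    then show ?thesis
      using is_steady_state_eq_weight[OF p \<open>d > 0\<close> True]
        is_steady_state_eq_weight[OF q \<open>d > 0\<close> True] \<open>p c = q c\<close> by simp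
  next
    case False
    with p q show ?thesis unfolding is_steady_state_def by simp
  qed
qed

lemma is_steady_state_exists:
  assumes "lam > 0" "d > 0" "\<forall>j\<in>{1..c}. 0 \<le> x j"
  shows "\<exists>p. is_steady_state c lam d x p"
proof -
  define w where "w = steady_state_weight c lam d x"
  define W where "W = (\<Sum>j=0..c. w j)"
  have w_nonneg: "w j \<ge> 0" for j
    unfolding w_def steady_state_weight_def using assms by (intro prod_nonneg) auto
  have "1 \<le> W"
    using member_le_sum[of c "{0..c}" w] w_nonneg unfolding W_def w_def steady_state_weight_def by simp
  define p where "p j = (if j \<le> c then w j / W else 0)" for j
  have "is_steady_state c lam d x p"
    unfolding is_steady_state_def
  proof (intro conjI allI impI ballI)
    show "(\<Sum>j=0..c. p j) = 1"
      using \<open>1 \<le> W\<close> by (simp add: p_def W_def flip: sum_divide_distrib)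
    fix j assume j: "j \<in> {1..c}"
    have "w (j - 1) = lam * x j * d / (real c - real j + 1) * w j"
      using steady_state_weight_pred[OF j] unfolding w_def .
    moreover have "real c - real j + 1 > 0" using j by simp
    ultimately show "p j * lam * x j = p (j - 1) * (real c - real j + 1) / d"
      using j \<open>d > 0\<close> \<open>1 \<le> W\<close> by (simp add: p_def field_simps)
  qed (use w_nonneg \<open>1 \<le> W\<close> in \<open>auto simp: p_def\<close>)
  then show ?thesis by blast
qed

lemma steady_state_eqI:
  "is_steady_state c lam d x p \<Longrightarrow> d > 0 \<Longrightarrow> steady_state c lam d x = p"
  unfolding steady_state_def is_steady_state_def[symmetric]
  using is_steady_state_unique by (intro the_equality) auto

lemma is_steady_state_steady_state:
  assumes "lam > 0" "d > 0" "x \<in> policies c"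
  shows "is_steady_state c lam d x (steady_state c lam d x)"
proof -
  obtain p where p: "is_steady_state c lam d x p"
    using is_steady_state_exists[OF assms(1,2)] assms(3) unfolding policies_def by blast
  moreover have "steady_state c lam d x = p"
    using steady_state_eqI[OF p assms(2)] .
  ultimately show ?thesis by simp
qed

lemma is_steady_state_balance:
  assumes "is_steady_state c lam d x p" "lam > 0" "d > 0" "j \<in> {1..c}"
  shows "p j * x j = service_ratio c lam d j * p (j - 1)"
  using assms unfolding is_steady_state_def service_ratio_def by (auto simp: field_simps)

lemma service_ratio_pos: "lam > 0 \<Longrightarrow> d > 0 \<Longrightarrow> j \<le> c \<Longrightarrow> service_ratio c lam d j > 0"
  unfolding service_ratio_def by simp

definition admissible_distributions :: "nat \<Rightarrow> real \<Rightarrow> real \<Rightarrow> (nat \<Rightarrow> real) set" where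
  "admissible_distributions c lam d = {p.
     (\<forall>j\<le>c. 0 \<le> p j) \<and> (\<forall>j>c. p j = 0) \<and> (\<Sum>j=0..c. p j) = 1 \<and>
     (\<forall>j\<in>{1..c}. service_ratio c lam d j * p (j - 1) \<le> p j)}"

lemma steady_state_in_admissible_distributions:
  assumes "lam > 0" "d > 0" "x \<in> policies c"
  shows "steady_state c lam d x \<in> admissible_distributions c lam d"
proof -
  let ?p = "steady_state c lam d x"
  have p: "is_steady_state c lam d x ?p"
    using is_steady_state_steady_state[OF assms] .
  have "service_ratio c lam d j * ?p (j - 1) \<le> ?p j" if j: "j \<in> {1..c}" for j
  proof -
    have "?p j * x j \<le> ?p j"
      using p assms(3) j unfolding is_steady_state_def policies_def
      by (intro mult_left_le) auto
    then show ?thesis using is_steady_state_balance[OF p assms(1,2) j] by simp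
  qed
  with p show ?thesis
    unfolding admissible_distributions_def is_steady_state_def by blast
qed

lemma admissible_distribution_is_steady_state:
  assumes "lam > 0" "d > 0" "p \<in> admissible_distributions c lam d"
  shows "\<exists>x\<in>policies c. steady_state c lam d x = p"
proof -
  let ?\<rho> = "service_ratio c lam d"
  have p_nonneg: "0 \<le> p j" for j
    using assms(3) unfolding admissible_distributions_def by (cases "j \<le> c") auto
  have p_ratio: "j \<in> {1..c} \<Longrightarrow> ?\<rho> j * p (j - 1) \<le> p j" for j
    using assms(3) unfolding admissible_distributions_def by blast
  define x where "x j = (if p j = 0 then 0 else ?\<rho> j * p (j - 1) / p j)" for j
  have balance: "p j * x j = ?\<rho> j * p (j - 1)" if j: "j \<in> {1..c}" for j
  proof (cases "p j = 0")
    case True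
    then have "?\<rho> j * p (j - 1) = 0"
      using p_ratio[OF j] p_nonneg[of "j - 1"] service_ratio_pos[OF assms(1,2), of j c] j
      by (simp add: mult_le_0_iff)
    with True show ?thesis by (simp add: x_def)
  qed (simp add: x_def)
  have "0 \<le> x j \<and> x j \<le> 1" if j: "j \<in> {1..c}" for j
    using p_ratio[OF j] p_nonneg[of j] p_nonneg[of "j - 1"] service_ratio_pos[OF assms(1,2), of j c] j
    by (auto simp: x_def divide_le_eq_1)
  then have "x \<in> policies c"
    unfolding policies_def by blast
  moreover have "is_steady_state c lam d x p"
    using assms balance unfolding is_steady_state_def admissible_distributions_def service_ratio_def
    by (auto simp: field_simps)
  then have "steady_state c lam d x = p"
    using steady_state_eqI assms(2) by blast
  ultimately show ?thesis by blast
qed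

lemma steady_state_image_policies:
  assumes "lam > 0" "d > 0"
  shows "steady_state c lam d ` policies c = admissible_distributions c lam d"
proof
  show "steady_state c lam d ` policies c \<subseteq> admissible_distributions c lam d"
    using steady_state_in_admissible_distributions[OF assms] by blast
  show "admissible_distributions c lam d \<subseteq> steady_state c lam d ` policies c"
    using admissible_distribution_is_steady_state[OF assms] by (auto intro: rev_image_eqI)
qed

definition lp_best_rewards ::
    "nat \<Rightarrow> real \<Rightarrow> real \<Rightarrow> nat \<Rightarrow> (nat \<Rightarrow> real) \<Rightarrow> (nat \<Rightarrow> real) \<Rightarrow> (nat \<Rightarrow> real) \<Rightarrow> nat \<Rightarrow> real" where
  "lp_best_rewards c lam d m a b p j =
     (MIN k\<in>{1..m}. a k * p j + b k * service_ratio c lam d j * p (j - 1))"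

lemma avg_reward_eq_lp_objective:
  assumes "lam > 0" "d > 0" "m \<ge> 1" "\<forall>y\<in>{0..1}. g y = (MIN k\<in>{1..m}. a k + b k * y)"
    and "x \<in> policies c"
  shows "avg_reward c lam d g x
           = lp_objective c lam (lp_best_rewards c lam d m a b (steady_state c lam d x))"
  unfolding avg_reward_def lp_objective_def
proof (intro sum.cong refl)
  fix j assume j: "j \<in> {1..c}"
  let ?p = "steady_state c lam d x"
  have p: "is_steady_state c lam d x ?p"
    using is_steady_state_steady_state[OF assms(1,2,5)] .
  have "0 \<le> ?p j" using p j unfolding is_steady_state_def by simp
  then have "?p j * (MIN k\<in>{1..m}. a k + b k * x j) = (MIN k\<in>{1..m}. ?p j * (a k + b k * x j))"
    using \<open>m \<ge> 1\<close> by (subst mono_Min_commute) (auto simp: mono_def mult_left_mono image_image)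
  also have "\<dots> = lp_best_rewards c lam d m a b ?p j"
    using is_steady_state_balance[OF p assms(1,2) j]
    unfolding lp_best_rewards_def by (simp add: algebra_simps)
  finally show "?p j * lam * g (x j) = lam * lp_best_rewards c lam d m a b ?p j"
    using assms(4,5) j unfolding policies_def by simp
qed

lemma lp_feasible_lp_best_rewards:
  "p \<in> admissible_distributions c lam d \<Longrightarrow> lp_feasible c lam d m a b p (lp_best_rewards c lam d m a b p)"
  unfolding lp_feasible_def admissible_distributions_def lp_best_rewards_def service_ratio_def
  by (auto intro: Min_le)

lemma lp_objective_le_lp_best_rewards:
  assumes "lam > 0" "m \<ge> 1" "lp_feasible c lam d m a b p gg"
  shows "\<exists>q\<in>admissible_distributions c lam d.
           lp_objective c lam gg \<le> lp_objective c lam (lp_best_rewards c lam d m a b q)"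
proof
  define q where "q j = (if j \<le> c then p j else 0)" for j
  show "q \<in> admissible_distributions c lam d"
    using assms(3) unfolding lp_feasible_def admissible_distributions_def service_ratio_def q_def
    by auto
  have "gg j \<le> lp_best_rewards c lam d m a b q j" if "j \<in> {1..c}" for j
    using assms(2,3) that unfolding lp_feasible_def lp_best_rewards_def service_ratio_def q_def
    by (intro Min.boundedI) auto
  then show "lp_objective c lam gg \<le> lp_objective c lam (lp_best_rewards c lam d m a b q)"
    unfolding lp_objective_def using \<open>lam > 0\<close> by (intro sum_mono) simp
qed

lemma continuous_on_Min:
  fixes f :: "'k \<Rightarrow> 'a::topological_space \<Rightarrow> 'b::linorder_topology"
  assumes "finite K" "K \<noteq> {}" "\<And>k. k \<in> K \<Longrightarrow> continuous_on S (f k)"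
  shows "continuous_on S (\<lambda>x. MIN k\<in>K. f k x)"
  using assms
proof (induction K rule: finite_ne_induct)
  case (insert k K)
  then have "continuous_on S (\<lambda>x. min (f k x) (MIN k\<in>K. f k x))"
    by (intro continuous_on_min) auto
  with insert show ?case by simp
qed simp

lemma continuous_on_coordinate: "continuous_on S (\<lambda>p. p j :: 'b::topological_space)"
  by (rule continuous_on_subset[OF continuous_on_product_coordinates subset_UNIV])

lemma continuous_on_lp_best_rewards:
  assumes "m \<ge> 1"
  shows "continuous_on S (\<lambda>p. lp_objective c lam (lp_best_rewards c lam d m a b p))"
proof -
  have "continuous_on S (\<lambda>p. lp_best_rewards c lam d m a b p j)" for j
    unfolding lp_best_rewards_def using assms
    by (intro continuous_on_Min continuous_on_add continuous_on_mult continuous_on_const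
        continuous_on_coordinate) auto
  then show ?thesis
    unfolding lp_objective_def by (intro continuous_on_sum continuous_on_mult continuous_on_const)
qed

lemma compact_admissible_distributions: "compact (admissible_distributions c lam d)"
proof -
  let ?\<rho> = "service_ratio c lam d"
  have "compact (PiE UNIV (\<lambda>_::nat. {0..1::real}))"
    using compactin_PiE[of "\<lambda>_. euclidean" UNIV "\<lambda>_. {0..1::real}"]
    by (simp add: euclidean_product_topology)
  moreover have "admissible_distributions c lam d \<subseteq> PiE UNIV (\<lambda>_. {0..1})"
  proof
    fix p assume p: "p \<in> admissible_distributions c lam d"
    have "p j \<in> {0..1}" for j
    proof (cases "j \<le> c")
      case True
      then have "p j \<le> (\<Sum>i=0..c. p i)"
        using p unfolding admissible_distributions_def by (intro member_le_sum) auto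
      with True p show ?thesis unfolding admissible_distributions_def by simp
    next
      case False
      with p show ?thesis unfolding admissible_distributions_def by simp
    qed
    then show "p \<in> PiE UNIV (\<lambda>_. {0..1})"
      by (simp add: PiE_UNIV_domain)
  qed
  moreover have "closed (admissible_distributions c lam d)"
  proof -
    have "closed {p::nat \<Rightarrow> real. \<forall>j\<le>c. 0 \<le> p j}"
      by (intro closed_Collect_all closed_Collect_imp open_Collect_const closed_Collect_le
          continuous_on_const continuous_on_coordinate)
    moreover have "closed {p::nat \<Rightarrow> real. \<forall>j>c. p j = 0}"
      by (intro closed_Collect_all closed_Collect_imp open_Collect_const closed_Collect_eq
          continuous_on_const continuous_on_coordinate)
    moreover have "closed {p::nat \<Rightarrow> real. (\<Sum>j=0..c. p j) = 1}"
      by (intro closed_Collect_eq continuous_on_sum continuous_on_const continuous_on_coordinate)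
    moreover have "closed {p::nat \<Rightarrow> real. \<forall>j\<in>{1..c}. ?\<rho> j * p (j - 1) \<le> p j}"
      unfolding Ball_def
      by (intro closed_Collect_all closed_Collect_imp open_Collect_const closed_Collect_le
          continuous_on_mult continuous_on_const continuous_on_coordinate)
    ultimately show ?thesis
      unfolding admissible_distributions_def by (intro closed_Collect_conj)
  qed
  ultimately show ?thesis
    by (metis compact_Int_closed inf.absorb_iff2)
qed

theorem theorem1:
  fixes c m :: nat and lam d :: real and g :: "real \<Rightarrow> real" and a b :: "nat \<Rightarrow> real"
  assumes "c \<ge> 1" and "lam > 0" and "d > 0"
    and "real c / (lam * d) < 1"
    and "concave_on {0..1} g" and "mono_on {0..1} g" and "g 0 = 0"
    and "m \<ge> 1"
    and "\<forall>x\<in>{0..1}. g x = (MIN k\<in>{1..m}. a k + b k * x)"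
  shows "(\<exists>p gg. lp_feasible c lam d m a b p gg \<and>
            lp_objective c lam gg = (SUP x\<in>policies c. avg_reward c lam d g x))
       \<and> (\<forall>p gg. lp_feasible c lam d m a b p gg \<longrightarrow>
            lp_objective c lam gg \<le> (SUP x\<in>policies c. avg_reward c lam d g x))"
proof -
  let ?K = "admissible_distributions c lam d"
  let ?V = "\<lambda>p. lp_objective c lam (lp_best_rewards c lam d m a b p)"
  have "avg_reward c lam d g ` policies c = (?V \<circ> steady_state c lam d) ` policies c"
    using avg_reward_eq_lp_objective[OF assms(2,3,8,9)] by (intro image_cong) auto
  then have rewards: "avg_reward c lam d g ` policies c = ?V ` ?K"
    by (simp only: image_comp[symmetric] steady_state_image_policies[OF assms(2,3)])
  have "(\<lambda>_. 1) \<in> policies c"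
    by (simp add: policies_def)
  then have K_nonempty: "?K \<noteq> {}"
    using steady_state_in_admissible_distributions[OF assms(2,3)] by blast
  obtain q where q: "q \<in> ?K" and q_max: "\<And>p. p \<in> ?K \<Longrightarrow> ?V p \<le> ?V q"
    using continuous_attains_sup[OF compact_admissible_distributions K_nonempty
        continuous_on_lp_best_rewards[OF assms(8)]] by blast
  have sup: "(SUP x\<in>policies c. avg_reward c lam d g x) = ?V q"
    unfolding rewards using q q_max by (intro cSup_eq_maximum) auto
  show ?thesis
    unfolding sup
  proof (intro conjI allI impI)
    show "\<exists>p gg. lp_feasible c lam d m a b p gg \<and> lp_objective c lam gg = ?V q"
      using lp_feasible_lp_best_rewards[OF q] by blast
    fix p gg assume "lp_feasible c lam d m a b p gg"
    then obtain q' where "q' \<in> ?K" "lp_objective c lam gg \<le> ?V q'"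
      using lp_objective_le_lp_best_rewards[OF assms(2,8)] by blast
    with q_max show "lp_objective c lam gg \<le> ?V q"
      by (meson order_trans)
  qed
qed

end
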